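(* Let $G=(V,E)$ be a graph with $N$ vertices and $M$ edges, let $d_{ij}\geq 0$ for each $ij\in E$, $d:=(d_{ij}^2)_{ij\in E}\in\mathbb{R}^M$, and define $\psi_{G,d}:\mathbb{R}^{nN}\to\mathbb{R}$ by $\psi_{G,d}(p)=\frac14\sum_{ij\in E}(\|p_j-p_i\|^2-d_{ij}^2)^2$. Write $\psi_{G,d}^{-1}(\leq r)=\{p\mid\psi_{G,d}(p)\leq r\}$. (a) For every $r>0$ there exists $c_1>0$ such that $\|\nabla\psi_{G,d}(p)\|^2\leq c_1\psi_{G,d}(p)$ for every $p\in\psi_{G,d}^{-1}(\leq r)$. (b) For every $r>0$ and every integer $l\geq2$ there exists $c_2>0$ such that $|\mathrm{D}^l\psi_{G,d}(p)(v_1,\ldots,v_l)|\leq c_2\|v_1\|\cdots\|v_l\|$ for every $p\in\psi_{G,d}^{-1}(\leq r)$ and all $v_1,\ldots,v_l\in\mathbb{R}^{nN}$. (c) Suppose that for each $p\in f_G^{-1}(d)$ the framework $G(p)$ is infinitesimally rigid. Then there exist $r,c_3>0$ such that $\|\nabla\psi_{G,d}(p)\|^2\geq c_3\psi_{G,d}(p)$ for every $p\in\psi_{G,d}^{-1}(\leq r)$.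
   Context: A graph $G=(V,E)$ has $V=\{1,\ldots,N\}$ and a nonempty set $E$ of two-element subsets $\{i,j\}$ of $V$ (written $ij$). Points of $\mathbb{R}^{nN}$ are $p=(p_1,\ldots,p_N)$ with $p_i\in\mathbb{R}^n$. The edge map is $f_G:\mathbb{R}^{nN}\to\mathbb{R}^M$, $f_G(p)=(\|p_j-p_i\|^2)_{ij\in E}$ (edges ordered as in $d$). A framework $G(p)$ is $G$ together with $p$. Let $C$ be the complete graph on $N$ vertices; $f_C^{-1}(f_C(p))$ is a smooth submanifold of $\mathbb{R}^{nN}$. $G(p)$ is infinitesimally rigid if the tangent space to $f_C^{-1}(f_C(p))$ at $p$ equals $\ker \mathrm{D}f_G(p)$. $\mathrm{D}^l$ denotes the $l$-th derivative as an $l$-linear map. *)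

theory Defs
  imports "HOL-Analysis.Analysis"
begin

text \<open>Vertices are the elements of a finite type 'v (so N = CARD('v)); points of
R^{nN} are p :: real^'n^'v with p$i \<in> R^n. Edges are two-element subsets of 'v.\<close>

definition is_graph :: "'v set set \<Rightarrow> bool" where
  "is_graph E \<longleftrightarrow> E \<noteq> {} \<and> (\<forall>e\<in>E. \<exists>i j. i \<noteq> j \<and> e = {i, j})"

text \<open>Squared length of edge e = {i,j} in the configuration p (independent of the
choice of order of i and j).\<close>
definition edge_sqlen :: "real^'n^'v \<Rightarrow> 'v set \<Rightarrow> real" where
  "edge_sqlen p e = (let ij = (SOME ij. fst ij \<noteq> snd ij \<and> e = {fst ij, snd ij})
                      in (norm (p $ snd ij - p $ fst ij))\<^sup>2)"

definition psi :: "'v set set \<Rightarrow> ('v set \<Rightarrow> real) \<Rightarrow> real^'n^'v \<Rightarrow> real" where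
  "psi E dl p = (1/4) * (\<Sum>e\<in>E. (edge_sqlen p e - (dl e)\<^sup>2)\<^sup>2)"

definition grad :: "('a::euclidean_space \<Rightarrow> real) \<Rightarrow> 'a \<Rightarrow> 'a" where
  "grad f p = (THE g. (f has_derivative (\<lambda>v. g \<bullet> v)) (at p))"

fun higher_deriv :: "('a::real_normed_vector \<Rightarrow> real) \<Rightarrow> 'a list \<Rightarrow> 'a \<Rightarrow> real" where
  "higher_deriv f [] p = f p"
| "higher_deriv f (v # vs) p = frechet_derivative (\<lambda>q. higher_deriv f vs q) (at p) v"

definition tangent_space :: "'a::real_normed_vector set \<Rightarrow> 'a \<Rightarrow> 'a set" where
  "tangent_space S p = {v. \<exists>\<gamma> \<epsilon>. \<epsilon> > 0 \<and> \<gamma> 0 = p \<and> (\<forall>t\<in>ball 0 \<epsilon>. \<gamma> t \<in> S)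
                              \<and> (\<gamma> has_vector_derivative v) (at 0)}"

text \<open>f_C^{-1}(f_C(p)) for the complete graph C.\<close>
definition congruent_configs :: "real^'n^'v \<Rightarrow> (real^'n^'v) set" where
  "congruent_configs p = {q. \<forall>i j. i \<noteq> j \<longrightarrow> (norm (q $ j - q $ i))\<^sup>2 = (norm (p $ j - p $ i))\<^sup>2}"

text \<open>ker D f_G(p): f_G has components edge_sqlen _ e, e \<in> E.\<close>
definition ker_Df :: "'v set set \<Rightarrow> real^'n^'v \<Rightarrow> (real^'n^'v) set" where
  "ker_Df E p = {v. \<forall>e\<in>E. frechet_derivative (\<lambda>q. edge_sqlen q e) (at p) v = 0}"

definition inf_rigid :: "'v set set \<Rightarrow> real^'n^'v \<Rightarrow> bool" where
  "inf_rigid E p \<longleftrightarrow> tangent_space (congruent_configs p) p = ker_Df E p"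

definition realizations :: "'v set set \<Rightarrow> ('v set \<Rightarrow> real) \<Rightarrow> (real^'n^'v) set" where
  "realizations E dl = {p. \<forall>e\<in>E. edge_sqlen p e = (dl e)\<^sup>2}"

end

theory Submission
  imports Defs
begin

text \<open>
Let r_e(p) = |p_j - p_i|^2 - d_ij^2 be the residual of the edge e = ij and R(p) the rigidity
matrix. Then psi = 1/4 sum_e r_e^2 is a quartic polynomial with gradient R(p)^T r(p). On a
sublevel set psi <= r every residual is at most 2 sqrt r and every edge vector p_j - p_i is
bounded; this gives (a) and, as the derivatives of order 2, 3, 4 are explicit and all higher ones
vanish, also (b).

For (c) suppose psi(p_k) -> 0 and |grad psi(p_k)|^2 = o(psi(p_k)). Translating each connected
component of the graph changes neither psi nor its gradient, so the p_k may be taken convergent,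
necessarily to a realization q. Let Q_k be a configuration congruent to q closest to p_k. Then
p_k - Q_k is orthogonal to the tangent space of the congruence orbit at Q_k, which is ker R(Q_k)
by infinitesimal rigidity, so the unit vector u_k in the direction of p_k - Q_k equals
R(Q_k)^T y_k; since |R(Q_k)^T y| = |R(q)^T y| for all y, the y_k can be chosen bounded, and along
a subsequence u_k -> u = R(q)^T y with |u| = 1. Writing p_k = Q_k + t_k u_k we get
r(p_k) = t_k (2 R(Q_k) u_k + t_k O(1)), so grad psi(p_k) / t_k -> 2 R(q)^T R(q) u while
psi(p_k) / t_k^2 stays bounded. Hence R(q)^T R(q) u = 0, so R(q) u = 0 and
|u|^2 = y . R(q) u = 0, a contradiction.
\<close>

section \<open>Edge vectors\<close>

text \<open>Each edge is oriented by the same choice as in \<^const>\<open>edge_sqlen\<close>.\<close>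

definition edge_src :: "'v set \<Rightarrow> 'v" where
  "edge_src e = fst (SOME ij. fst ij \<noteq> snd ij \<and> e = {fst ij, snd ij})"

definition edge_tgt :: "'v set \<Rightarrow> 'v" where
  "edge_tgt e = snd (SOME ij. fst ij \<noteq> snd ij \<and> e = {fst ij, snd ij})"

definition edge_vec :: "'v set \<Rightarrow> real^'n^'v \<Rightarrow> real^'n" where
  "edge_vec e p = p $ edge_tgt e - p $ edge_src e"

definition edge_adj :: "'v set \<Rightarrow> real^'n \<Rightarrow> real^'n^'v" where
  "edge_adj e y = axis (edge_tgt e) y - axis (edge_src e) y"

definition edge_form :: "'v set \<Rightarrow> real^'n^'v \<Rightarrow> real^'n^'v \<Rightarrow> real" where
  "edge_form e u v = edge_vec e u \<bullet> edge_vec e v"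

lemma edge_sqlen_eq_edge_form: "edge_sqlen p e = edge_form e p p"
  unfolding edge_sqlen_def Let_def edge_form_def edge_vec_def edge_src_def edge_tgt_def
  by (simp add: power2_norm_eq_inner)

lemma edge_vec_add: "edge_vec e (p + q) = edge_vec e p + edge_vec e q"
  unfolding edge_vec_def by simp

lemma edge_vec_scaleR: "edge_vec e (c *\<^sub>R p) = c *\<^sub>R edge_vec e p"
  unfolding edge_vec_def by (simp add: scaleR_diff_right)

lemma norm_edge_vec_le: "norm (edge_vec e p) \<le> 2 * norm p"
  using norm_triangle_ineq4[of "p $ edge_tgt e" "p $ edge_src e"]
    Finite_Cartesian_Product.norm_nth_le[of p "edge_tgt e"]
    Finite_Cartesian_Product.norm_nth_le[of p "edge_src e"]
  unfolding edge_vec_def by linarith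

lemma bounded_linear_edge_vec: "bounded_linear (edge_vec e)"
  by (rule bounded_linear_intro[where K = 2])
    (auto simp: edge_vec_add edge_vec_scaleR norm_edge_vec_le mult.commute[of _ 2])

lemmas has_derivative_edge_vec [derivative_intros] =
  bounded_linear.has_derivative[OF bounded_linear_edge_vec]

lemmas tendsto_edge_vec [tendsto_intros] = bounded_linear.tendsto[OF bounded_linear_edge_vec]

lemma inner_edge_adj: "edge_adj e y \<bullet> v = y \<bullet> edge_vec e v"
  unfolding edge_adj_def edge_vec_def by (simp add: inner_diff_left inner_diff_right inner_axis')

lemma norm_edge_adj_le: "norm (edge_adj e y) \<le> 2 * norm y"
proof -
  have axis: "norm (axis i y) = norm y" for i :: "'v::finite"
    by (simp add: norm_eq_sqrt_inner inner_axis_axis)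
  show ?thesis
    using norm_triangle_ineq4[of "axis (edge_tgt e) y" "axis (edge_src e) y"]
    unfolding edge_adj_def axis by linarith
qed

lemma bounded_linear_edge_adj: "bounded_linear (edge_adj e)"
proof (rule bounded_linear_intro[where K = 2])
  show "edge_adj e (x + y) = edge_adj e x + edge_adj e y" for x y
    unfolding edge_adj_def axis_def by (simp add: vec_eq_iff)
  show "edge_adj e (c *\<^sub>R x) = c *\<^sub>R edge_adj e x" for c x
    unfolding edge_adj_def axis_def by (simp add: vec_eq_iff algebra_simps)
qed (metis norm_edge_adj_le mult.commute)

lemmas tendsto_edge_adj [tendsto_intros] = bounded_linear.tendsto[OF bounded_linear_edge_adj]

lemma inner_edge_adj_edge_adj:
  "edge_adj e x \<bullet> edge_adj e' y =
    ((if edge_tgt e = edge_tgt e' then 1 else 0) - (if edge_tgt e = edge_src e' then 1 else 0)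
     - (if edge_src e = edge_tgt e' then 1 else 0) + (if edge_src e = edge_src e' then 1 else 0))
    * (x \<bullet> y)"
  unfolding edge_adj_def
  by (simp add: inner_diff_left inner_diff_right inner_axis_axis algebra_simps)

lemma edge_form_commute: "edge_form e u v = edge_form e v u"
  unfolding edge_form_def by (rule inner_commute)

lemma abs_edge_form_le: "\<bar>edge_form e u v\<bar> \<le> 4 * (norm u * norm v)"
proof -
  have "\<bar>edge_form e u v\<bar> \<le> norm (edge_vec e u) * norm (edge_vec e v)"
    unfolding edge_form_def by (rule Cauchy_Schwarz_ineq2)
  also have "\<dots> \<le> (2 * norm u) * (2 * norm v)"
    by (intro mult_mono norm_edge_vec_le) auto
  finally show ?thesis by simp
qed

lemma has_derivative_edge_form [derivative_intros]:
  "((\<lambda>q. edge_form e q v) has_derivative (\<lambda>w. edge_form e w v)) (at p)"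
  unfolding edge_form_def by (auto intro!: derivative_eq_intros)

lemma tendsto_edge_form [tendsto_intros]:
  "(f \<longlongrightarrow> a) F \<Longrightarrow> (g \<longlongrightarrow> b) F \<Longrightarrow> ((\<lambda>x. edge_form e (f x) (g x)) \<longlongrightarrow> edge_form e a b) F"
  unfolding edge_form_def by (intro tendsto_intros)

section \<open>The gradient and part (a)\<close>

definition residual :: "('v set \<Rightarrow> real) \<Rightarrow> real^'n^'v \<Rightarrow> 'v set \<Rightarrow> real" where
  "residual dl p e = edge_form e p p - (dl e)\<^sup>2"

definition psi_grad :: "'v set set \<Rightarrow> ('v set \<Rightarrow> real) \<Rightarrow> real^'n^'v \<Rightarrow> real^'n^'v" where
  "psi_grad E dl p = (\<Sum>e\<in>E. residual dl p e *\<^sub>R edge_adj e (edge_vec e p))"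

lemma psi_eq_residuals: "psi E dl p = (1/4) * (\<Sum>e\<in>E. (residual dl p e)\<^sup>2)"
  unfolding psi_def residual_def edge_sqlen_eq_edge_form ..

lemma psi_nonneg: "psi E dl p \<ge> 0"
  unfolding psi_eq_residuals by (simp add: sum_nonneg)

lemma realizations_iff_residual: "p \<in> realizations E dl \<longleftrightarrow> (\<forall>e\<in>E. residual dl p e = 0)"
  unfolding realizations_def residual_def edge_sqlen_eq_edge_form by simp

lemma psi_eq_0_iff:
  fixes E :: "'v::finite set set"
  shows "psi E dl p = 0 \<longleftrightarrow> p \<in> realizations E dl"
  unfolding psi_eq_residuals realizations_iff_residual by (simp add: sum_nonneg_eq_0_iff)

lemma psi_psi_grad_cong:
  assumes "\<forall>e\<in>E. edge_vec e p' = edge_vec e p"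
  shows "psi E dl p' = psi E dl p" and "psi_grad E dl p' = psi_grad E dl p"
  using assms unfolding psi_eq_residuals psi_grad_def residual_def edge_form_def
  by (auto intro!: sum.cong)


lemma has_derivative_residual [derivative_intros]:
  "((\<lambda>q. residual dl q e) has_derivative (\<lambda>v. 2 * edge_form e p v)) (at p)"
  unfolding residual_def edge_form_def
  by (auto intro!: derivative_eq_intros simp: inner_commute)

lemma inner_psi_grad: "psi_grad E dl p \<bullet> v = (\<Sum>e\<in>E. residual dl p e * edge_form e p v)"
  unfolding psi_grad_def edge_form_def by (simp add: inner_sum_left inner_edge_adj)

lemma has_derivative_psi:
  "(psi E dl has_derivative (\<lambda>v. \<Sum>e\<in>E. residual dl p e * edge_form e p v)) (at p)"
  unfolding psi_eq_residuals[abs_def]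
  by (rule derivative_eq_intros has_derivative_residual refl | simp add: sum_distrib_left mult.commute)+

lemma grad_eqI:
  fixes f :: "'a::euclidean_space \<Rightarrow> real"
  assumes "(f has_derivative (\<lambda>v. g \<bullet> v)) (at p)"
  shows "grad f p = g"
  unfolding grad_def
proof (rule the_equality)
  fix h assume "(f has_derivative (\<lambda>v. h \<bullet> v)) (at p)"
  then have "(\<lambda>v. h \<bullet> v) = (\<lambda>v. g \<bullet> v)" by (rule has_derivative_unique[OF _ assms])
  then have "h \<bullet> (h - g) = g \<bullet> (h - g)" by (rule fun_cong)
  then have "(h - g) \<bullet> (h - g) = 0" by (simp add: inner_diff_left)
  then show "h = g" by simp
qed (rule assms)

lemma grad_psi: "grad (psi E dl) p = psi_grad E dl p"
proof (rule grad_eqI)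
  have "(\<lambda>v. psi_grad E dl p \<bullet> v) = (\<lambda>v. \<Sum>e\<in>E. residual dl p e * edge_form e p v)"
    by (rule ext) (rule inner_psi_grad)
  then show "(psi E dl has_derivative (\<lambda>v. psi_grad E dl p \<bullet> v)) (at p)"
    by (simp only: has_derivative_psi)
qed

lemma abs_residual_le:
  fixes E :: "'v::finite set set"
  assumes "e \<in> E" and "psi E dl p \<le> r"
  shows "\<bar>residual dl p e\<bar> \<le> 2 * sqrt r"
proof -
  have "(residual dl p e)\<^sup>2 \<le> (\<Sum>e\<in>E. (residual dl p e)\<^sup>2)"
    by (rule member_le_sum) (use assms in auto)
  also have "\<dots> \<le> 4 * r" using assms(2) unfolding psi_eq_residuals by simp
  finally have "\<bar>residual dl p e\<bar> \<le> sqrt (4 * r)" by (simp add: real_le_rsqrt)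
  then show ?thesis by (simp add: real_sqrt_mult)
qed

definition edge_length_bound :: "'v set set \<Rightarrow> ('v set \<Rightarrow> real) \<Rightarrow> real \<Rightarrow> real" where
  "edge_length_bound E dl r = sqrt ((\<Sum>e\<in>E. (dl e)\<^sup>2) + 2 * sqrt r)"

lemma edge_length_bound_nonneg: "r \<ge> 0 \<Longrightarrow> edge_length_bound E dl r \<ge> 0"
  unfolding edge_length_bound_def by (simp add: sum_nonneg)

lemma norm_edge_vec_le_edge_length_bound:
  fixes E :: "'v::finite set set"
  assumes "e \<in> E" and "psi E dl p \<le> r"
  shows "norm (edge_vec e p) \<le> edge_length_bound E dl r"
proof -
  have "(dl e)\<^sup>2 \<le> (\<Sum>e\<in>E. (dl e)\<^sup>2)"
    by (rule member_le_sum) (use assms in auto)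
  then have "edge_vec e p \<bullet> edge_vec e p \<le> (\<Sum>e\<in>E. (dl e)\<^sup>2) + 2 * sqrt r"
    using abs_residual_le[OF assms] unfolding residual_def edge_form_def by linarith
  then show ?thesis
    unfolding edge_length_bound_def norm_eq_sqrt_inner by (simp add: real_sqrt_le_iff)
qed

lemma abs_edge_form_le_edge_length_bound:
  fixes E :: "'v::finite set set"
  assumes "e \<in> E" and "psi E dl p \<le> r"
  shows "\<bar>edge_form e p v\<bar> \<le> 2 * edge_length_bound E dl r * norm v"
proof -
  have "edge_length_bound E dl r \<ge> 0"
    using norm_ge_zero norm_edge_vec_le_edge_length_bound[OF assms] by (rule order_trans)
  have "\<bar>edge_form e p v\<bar> \<le> norm (edge_vec e p) * norm (edge_vec e v)"
    unfolding edge_form_def by (rule Cauchy_Schwarz_ineq2)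
  also have "\<dots> \<le> edge_length_bound E dl r * (2 * norm v)"
    by (intro mult_mono norm_edge_vec_le norm_edge_vec_le_edge_length_bound assms)
      (use \<open>edge_length_bound E dl r \<ge> 0\<close> in auto)
  finally show ?thesis by simp
qed

lemma norm_psi_grad_le:
  fixes E :: "'v::finite set set"
  assumes "psi E dl p \<le> r"
  shows "norm (psi_grad E dl p) \<le> 4 * card E * edge_length_bound E dl r * sqrt (psi E dl p)"
proof -
  let ?L = "edge_length_bound E dl r"
  have "norm (psi_grad E dl p) \<le> (\<Sum>e\<in>E. norm (residual dl p e *\<^sub>R edge_adj e (edge_vec e p)))"
    unfolding psi_grad_def by (rule norm_sum)
  also have "\<dots> \<le> (\<Sum>e\<in>E. (2 * sqrt (psi E dl p)) * (2 * ?L))"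
  proof (rule sum_mono)
    fix e assume e: "e \<in> E"
    have adj: "norm (edge_adj e (edge_vec e p)) \<le> 2 * ?L"
      using norm_edge_adj_le[of e "edge_vec e p"] norm_edge_vec_le_edge_length_bound[OF e assms]
      by linarith
    have res: "\<bar>residual dl p e\<bar> \<le> 2 * sqrt (psi E dl p)"
      by (rule abs_residual_le[OF e]) simp
    have "norm (residual dl p e *\<^sub>R edge_adj e (edge_vec e p))
        = \<bar>residual dl p e\<bar> * norm (edge_adj e (edge_vec e p))" by simp
    also have "\<dots> \<le> (2 * sqrt (psi E dl p)) * (2 * ?L)"
      by (rule mult_mono[OF res adj]) (auto simp: psi_nonneg)
    finally show "norm (residual dl p e *\<^sub>R edge_adj e (edge_vec e p))
        \<le> (2 * sqrt (psi E dl p)) * (2 * ?L)" .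
  qed
  finally show ?thesis by (simp add: ac_simps)
qed

lemma gradient_upper_bound:
  fixes E :: "'v::finite set set"
  assumes "r > 0"
  shows "\<exists>c1>0. \<forall>p::real^'n^'v. psi E dl p \<le> r \<longrightarrow>
            (norm (grad (psi E dl) p))\<^sup>2 \<le> c1 * psi E dl p"
proof (intro exI conjI allI impI)
  let ?c = "(4 * card E * edge_length_bound E dl r)\<^sup>2"
  show "0 < ?c + 1" by (intro add_nonneg_pos) auto
  fix p :: "real^'n^'v" assume "psi E dl p \<le> r"
  then have "(norm (psi_grad E dl p))\<^sup>2 \<le> (4 * card E * edge_length_bound E dl r * sqrt (psi E dl p))\<^sup>2"
    by (intro power_mono norm_psi_grad_le) simp_all
  also have "\<dots> = ?c * psi E dl p"
    unfolding power_mult_distrib[of _ "sqrt _"] real_sqrt_pow2[OF psi_nonneg] ..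
  also have "\<dots> \<le> (?c + 1) * psi E dl p"
    using psi_nonneg[of E dl p] by (simp add: distrib_right)
  finally show "(norm (grad (psi E dl) p))\<^sup>2 \<le> (?c + 1) * psi E dl p"
    by (simp only: grad_psi)
qed

section \<open>Higher derivatives and part (b)\<close>

lemma higher_deriv_Cons_eqI:
  assumes "\<And>q. higher_deriv f vs q = g q" and "(g has_derivative g') (at p)"
  shows "higher_deriv f (v # vs) p = g' v"
proof -
  have "(\<lambda>q. higher_deriv f vs q) = g" using assms(1) by (rule ext)
  then show ?thesis using frechet_derivative_at[OF assms(2)] by simp
qed

lemma higher_deriv_psi_1:
  "higher_deriv (psi E dl) [v] p = (\<Sum>e\<in>E. residual dl p e * edge_form e p v)"
  by (rule higher_deriv_Cons_eqI[OF _ has_derivative_psi]) simp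

lemma higher_deriv_psi_2:
  "higher_deriv (psi E dl) [v1, v2] p =
    (\<Sum>e\<in>E. 2 * edge_form e p v1 * edge_form e p v2 + residual dl p e * edge_form e v1 v2)"
  by (rule higher_deriv_Cons_eqI[OF higher_deriv_psi_1])
    (auto intro!: derivative_eq_intros ext sum.cong simp: edge_form_commute algebra_simps)

lemma higher_deriv_psi_3:
  "higher_deriv (psi E dl) [v1, v2, v3] p =
    (\<Sum>e\<in>E. 2 * (edge_form e v1 v2 * edge_form e p v3 + edge_form e p v2 * edge_form e v1 v3
                 + edge_form e p v1 * edge_form e v2 v3))"
  by (rule higher_deriv_Cons_eqI[OF higher_deriv_psi_2])
    (auto intro!: derivative_eq_intros ext sum.cong simp: edge_form_commute algebra_simps)

lemma higher_deriv_psi_4: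
  "higher_deriv (psi E dl) [v1, v2, v3, v4] p =
    (\<Sum>e\<in>E. 2 * (edge_form e v2 v3 * edge_form e v1 v4 + edge_form e v1 v3 * edge_form e v2 v4
                 + edge_form e v1 v2 * edge_form e v3 v4))"
  by (rule higher_deriv_Cons_eqI[OF higher_deriv_psi_3])
    (auto intro!: derivative_eq_intros ext sum.cong simp: edge_form_commute algebra_simps)

lemma higher_deriv_psi_eq_0:
  assumes "length vs \<ge> 5"
  shows "higher_deriv (psi E dl) vs p = 0"
  using assms
proof (induction vs arbitrary: p)
  case (Cons v vs)
  show ?case
  proof (cases "length vs = 4")
    case True
    then obtain v1 v2 v3 v4 where "vs = [v1, v2, v3, v4]"
      by (auto simp: numeral_eq_Suc length_Suc_conv)
    then show ?thesis
      by (simp only: higher_deriv_Cons_eqI[OF higher_deriv_psi_4 has_derivative_const])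
  next
    case False
    with Cons.prems have "\<And>q. higher_deriv (psi E dl) vs q = 0" by (intro Cons.IH) simp
    then show ?thesis by (rule higher_deriv_Cons_eqI) (rule has_derivative_const)
  qed
qed simp

lemma abs_mult_le_mult: "\<bar>x\<bar> \<le> a \<Longrightarrow> \<bar>y\<bar> \<le> b \<Longrightarrow> \<bar>x * y\<bar> \<le> a * (b::real)"
  by (simp add: abs_mult mult_mono')

lemma abs_sum_le_card_mult:
  assumes "\<And>e. e \<in> E \<Longrightarrow> \<bar>f e\<bar> \<le> K"
  shows "\<bar>\<Sum>e\<in>E. f e\<bar> \<le> card E * (K::real)"
  using sum_abs[of f E] sum_bounded_above[of E "\<lambda>e. \<bar>f e\<bar>" K] assms by (meson order_trans)

lemma abs_higher_deriv_psi_2_le: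
  fixes E :: "'v::finite set set"
  assumes "psi E dl p \<le> r"
  defines "L \<equiv> edge_length_bound E dl r"
  shows "\<bar>higher_deriv (psi E dl) [v1, v2] p\<bar>
    \<le> real (card E) * ((8 * L\<^sup>2 + 8 * sqrt r) * (norm v1 * norm v2))"
  unfolding higher_deriv_psi_2
proof (rule abs_sum_le_card_mult)
  fix e assume e: "e \<in> E"
  have "\<bar>2 * edge_form e p v1 * edge_form e p v2\<bar> \<le> 2 * (2 * L * norm v1) * (2 * L * norm v2)"
    unfolding L_def
    by (intro abs_mult_le_mult abs_edge_form_le_edge_length_bound[OF e assms(1)]; simp)
  moreover have "\<bar>residual dl p e * edge_form e v1 v2\<bar> \<le> (2 * sqrt r) * (4 * (norm v1 * norm v2))"
    by (intro abs_mult_le_mult abs_residual_le[OF e assms(1)] abs_edge_form_le)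
  ultimately show "\<bar>2 * edge_form e p v1 * edge_form e p v2 + residual dl p e * edge_form e v1 v2\<bar>
      \<le> (8 * L\<^sup>2 + 8 * sqrt r) * (norm v1 * norm v2)"
    by (simp add: algebra_simps power2_eq_square)
qed

lemma abs_higher_deriv_psi_3_le:
  fixes E :: "'v::finite set set"
  assumes "psi E dl p \<le> r"
  defines "L \<equiv> edge_length_bound E dl r"
  shows "\<bar>higher_deriv (psi E dl) [v1, v2, v3] p\<bar>
    \<le> real (card E) * (48 * L * (norm v1 * norm v2 * norm v3))"
  unfolding higher_deriv_psi_3
proof (rule abs_sum_le_card_mult)
  fix e assume e: "e \<in> E"
  note bound_p = abs_edge_form_le_edge_length_bound[OF e assms(1), folded L_def]
  have "\<bar>edge_form e v1 v2 * edge_form e p v3\<bar> \<le> (4 * (norm v1 * norm v2)) * (2 * L * norm v3)"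
    "\<bar>edge_form e p v2 * edge_form e v1 v3\<bar> \<le> (2 * L * norm v2) * (4 * (norm v1 * norm v3))"
    "\<bar>edge_form e p v1 * edge_form e v2 v3\<bar> \<le> (2 * L * norm v1) * (4 * (norm v2 * norm v3))"
    by (intro abs_mult_le_mult abs_edge_form_le bound_p)+
  then show "\<bar>2 * (edge_form e v1 v2 * edge_form e p v3 + edge_form e p v2 * edge_form e v1 v3
                 + edge_form e p v1 * edge_form e v2 v3)\<bar> \<le> 48 * L * (norm v1 * norm v2 * norm v3)"
    by (simp add: algebra_simps)
qed

lemma abs_higher_deriv_psi_4_le:
  "\<bar>higher_deriv (psi E dl) [v1, v2, v3, v4] p\<bar>
    \<le> real (card E) * (96 * (norm v1 * norm v2 * norm v3 * norm v4))"
  unfolding higher_deriv_psi_4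
proof (rule abs_sum_le_card_mult)
  fix e
  have "\<bar>edge_form e v2 v3 * edge_form e v1 v4\<bar> \<le> (4 * (norm v2 * norm v3)) * (4 * (norm v1 * norm v4))"
    "\<bar>edge_form e v1 v3 * edge_form e v2 v4\<bar> \<le> (4 * (norm v1 * norm v3)) * (4 * (norm v2 * norm v4))"
    "\<bar>edge_form e v1 v2 * edge_form e v3 v4\<bar> \<le> (4 * (norm v1 * norm v2)) * (4 * (norm v3 * norm v4))"
    by (intro abs_mult_le_mult abs_edge_form_le)+
  then show "\<bar>2 * (edge_form e v2 v3 * edge_form e v1 v4 + edge_form e v1 v3 * edge_form e v2 v4
                 + edge_form e v1 v2 * edge_form e v3 v4)\<bar> \<le> 96 * (norm v1 * norm v2 * norm v3 * norm v4)"
    by (simp add: algebra_simps)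
qed

lemma abs_higher_deriv_psi_le:
  fixes E :: "'v::finite set set"
  assumes p: "psi E dl p \<le> r" and len: "length vs \<ge> 2"
  defines "C \<equiv> 8 * (edge_length_bound E dl r)\<^sup>2 + 8 * sqrt r + 48 * edge_length_bound E dl r + 96"
  shows "\<bar>higher_deriv (psi E dl) vs p\<bar> \<le> real (card E) * (C * prod_list (map norm vs))"
proof -
  let ?L = "edge_length_bound E dl r"
  have "r \<ge> 0" using psi_nonneg p by (rule order_trans)
  then have "?L \<ge> 0" and "sqrt r \<ge> 0" by (simp_all add: edge_length_bound_nonneg)
  have prod: "prod_list (map norm vs) \<ge> 0" by (rule prod_list_nonneg) auto
  have weaken: "\<bar>higher_deriv (psi E dl) vs p\<bar> \<le> card E * (C * prod_list (map norm vs))"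
    if "\<bar>higher_deriv (psi E dl) vs p\<bar> \<le> card E * (c * prod_list (map norm vs))"
      and "c \<le> C" for c :: real
    using that(1) mult_left_mono[OF mult_right_mono[OF that(2) prod], of "card E"] by simp
  consider "length vs = 2" | "length vs = 3" | "length vs = 4" | "length vs \<ge> 5"
    using len by linarith
  then show ?thesis
  proof cases
    case 1
    then obtain v1 v2 where "vs = [v1, v2]" by (auto simp: numeral_eq_Suc length_Suc_conv)
    then show ?thesis
      using abs_higher_deriv_psi_2_le[OF p, of v1 v2] \<open>?L \<ge> 0\<close>
      by (intro weaken[of "8 * ?L\<^sup>2 + 8 * sqrt r"]) (auto simp: C_def)
  next
    case 2
    then obtain v1 v2 v3 where "vs = [v1, v2, v3]" by (auto simp: numeral_eq_Suc length_Suc_conv)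
    then show ?thesis
      using abs_higher_deriv_psi_3_le[OF p, of v1 v2 v3] \<open>sqrt r \<ge> 0\<close>
      by (intro weaken[of "48 * ?L"]) (auto simp: C_def ac_simps)
  next
    case 3
    then obtain v1 v2 v3 v4 where "vs = [v1, v2, v3, v4]"
      by (auto simp: numeral_eq_Suc length_Suc_conv)
    then show ?thesis
      using abs_higher_deriv_psi_4_le[of E dl v1 v2 v3 v4 p] \<open>?L \<ge> 0\<close> \<open>sqrt r \<ge> 0\<close>
      by (intro weaken[of 96]) (auto simp: C_def ac_simps)
  next
    case 4
    have "C \<ge> 0" unfolding C_def using \<open>?L \<ge> 0\<close> \<open>sqrt r \<ge> 0\<close> by simp
    with 4 show ?thesis using higher_deriv_psi_eq_0[of vs E dl p] prod by simp
  qed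
qed

lemma higher_deriv_upper_bound:
  fixes E :: "'v::finite set set"
  assumes "r > 0" and "l \<ge> 2"
  shows "\<exists>c2>0. \<forall>p::real^'n^'v. psi E dl p \<le> r \<longrightarrow>
            (\<forall>vs. length vs = l \<longrightarrow>
               \<bar>higher_deriv (psi E dl) vs p\<bar> \<le> c2 * prod_list (map norm vs))"
proof (intro exI conjI allI impI)
  let ?C = "8 * (edge_length_bound E dl r)\<^sup>2 + 8 * sqrt r + 48 * edge_length_bound E dl r + 96"
  have "?C \<ge> 0" using assms(1) by (simp add: edge_length_bound_nonneg)
  then show "card E * ?C + 1 > 0" by (intro add_nonneg_pos) auto
  fix p :: "real^'n^'v" and vs :: "(real^'n^'v) list"
  assume "psi E dl p \<le> r" and "length vs = l"
  then have "\<bar>higher_deriv (psi E dl) vs p\<bar> \<le> card E * ?C * prod_list (map norm vs)"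
    using abs_higher_deriv_psi_le[of E dl p r vs] assms(2) by (simp add: mult.assoc)
  also have "\<dots> \<le> (card E * ?C + 1) * prod_list (map norm vs)"
    by (intro mult_right_mono prod_list_nonneg) auto
  finally show "\<bar>higher_deriv (psi E dl) vs p\<bar> \<le> (card E * ?C + 1) * prod_list (map norm vs)" .
qed

section \<open>Infinitesimal rigidity and part (c)\<close>

lemma inner_tangent_space_eq_0_if_closest:
  fixes p q :: "'a::real_inner"
  assumes "q \<in> S" and closest: "\<forall>y\<in>S. dist p q \<le> dist p y" and "v \<in> tangent_space S q"
  shows "(p - q) \<bullet> v = 0"
proof -
  obtain \<gamma> \<epsilon> where "\<epsilon> > 0" and \<gamma>0: "\<gamma> 0 = q" and \<gamma>S: "\<forall>t\<in>ball 0 \<epsilon>. \<gamma> t \<in> S"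
    and \<gamma>': "(\<gamma> has_derivative (\<lambda>t. t *\<^sub>R v)) (at 0)"
    using assms(3) unfolding tangent_space_def has_vector_derivative_def by blast
  define \<phi> where "\<phi> t = (p - \<gamma> t) \<bullet> (p - \<gamma> t)" for t
  have \<phi>': "(\<phi> has_derivative (\<lambda>t. - (t *\<^sub>R v) \<bullet> (p - \<gamma> 0) + (p - \<gamma> 0) \<bullet> - (t *\<^sub>R v))) (at 0)"
    unfolding \<phi>_def[abs_def] by (auto intro!: derivative_eq_intros \<gamma>')
  have "eventually (\<lambda>t. \<phi> 0 \<le> \<phi> t) (at 0)"
    unfolding eventually_at
  proof (intro exI[of _ \<epsilon>] conjI ballI impI)
    fix t :: real assume "t \<noteq> 0 \<and> dist t 0 < \<epsilon>"
    then have "dist p q \<le> dist p (\<gamma> t)" using \<gamma>S closest by (auto simp: dist_commute)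
    then have "(dist p q)\<^sup>2 \<le> (dist p (\<gamma> t))\<^sup>2" by (simp add: power_mono)
    then show "\<phi> 0 \<le> \<phi> t" unfolding \<phi>_def \<gamma>0 dist_norm power2_norm_eq_inner .
  qed (rule \<open>\<epsilon> > 0\<close>)
  from has_derivative_local_min[OF \<phi>' this]
  have "- (1 *\<^sub>R v) \<bullet> (p - \<gamma> 0) + (p - \<gamma> 0) \<bullet> - (1 *\<^sub>R v) = 0" by metis
  then show ?thesis using \<gamma>0 by (simp add: inner_commute)
qed

lemma tendsto_closest_point:
  assumes "closed S" and "a \<in> S" and "p \<longlonglongrightarrow> a"
  shows "(\<lambda>k. closest_point S (p k)) \<longlonglongrightarrow> a"
proof (rule tendsto_dist_iff[THEN iffD2], rule Lim_null_comparison)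
  have "dist (closest_point S (p k)) a \<le> 2 * dist (p k) a" for k
    using closest_point_le[OF assms(1,2), of "p k"] dist_triangle[of "closest_point S (p k)" a "p k"]
      dist_commute[of "closest_point S (p k)" "p k"]
    by linarith
  then show "\<forall>\<^sub>F k in sequentially. norm (dist (closest_point S (p k)) a) \<le> 2 * dist (p k) a"
    by simp
  show "(\<lambda>k. 2 * dist (p k) a) \<longlonglongrightarrow> 0"
    using tendsto_mult_left_zero[OF tendsto_dist_iff[THEN iffD1, OF assms(3)], of 2] by simp
qed

lemma congruent_configs_self: "p \<in> congruent_configs p"
  unfolding congruent_configs_def by simp

lemma norm_diff_eq_if_congruent:
  assumes "q \<in> congruent_configs p"
  shows "norm (q $ j - q $ i) = norm (p $ j - p $ i)"
proof (cases "i = j")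
  case False
  then show ?thesis
    using assms unfolding congruent_configs_def by (simp add: power2_eq_iff_nonneg)
qed simp

lemma congruent_configs_eq:
  assumes "q \<in> congruent_configs p"
  shows "congruent_configs q = congruent_configs p"
  using norm_diff_eq_if_congruent[OF assms] unfolding congruent_configs_def by simp

lemma closed_congruent_configs: "closed (congruent_configs (p :: real^'n^'v))"
proof -
  have "congruent_configs p =
      (\<Inter>i. \<Inter>j. {q. i \<noteq> j \<longrightarrow> (norm (q $ j - q $ i))\<^sup>2 = (norm (p $ j - p $ i))\<^sup>2})"
    unfolding congruent_configs_def by auto
  also have "closed \<dots>"
  proof (intro closed_INT ballI)
    fix i j :: "'v::finite"
    show "closed {q. i \<noteq> j \<longrightarrow> (norm (q $ j - q $ i))\<^sup>2 = (norm (p $ j - p $ i))\<^sup>2}"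
      by (cases "i = j") (auto intro!: closed_Collect_eq continuous_intros)
  qed
  finally show ?thesis .
qed

lemma inner_diff_diff_eq_norms:
  fixes a b c d :: "'a::real_inner"
  shows "(a - b) \<bullet> (c - d) =
    ((norm (a - d))\<^sup>2 + (norm (b - c))\<^sup>2 - (norm (a - c))\<^sup>2 - (norm (b - d))\<^sup>2) / 2"
  by (simp add: power2_norm_eq_inner inner_diff_left inner_diff_right inner_commute algebra_simps)

lemma inner_edge_vec_eq_if_congruent:
  assumes "q \<in> congruent_configs p"
  shows "edge_vec e q \<bullet> edge_vec e' q = edge_vec e p \<bullet> edge_vec e' p"
  unfolding edge_vec_def inner_diff_diff_eq_norms norm_diff_eq_if_congruent[OF assms] ..

lemma realizations_congruent:
  assumes "p \<in> realizations E dl" and "q \<in> congruent_configs p"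
  shows "q \<in> realizations E dl"
  using assms(1) unfolding realizations_def edge_sqlen_eq_edge_form edge_form_def
  by (simp add: inner_edge_vec_eq_if_congruent[OF assms(2)])

definition rigidity_transpose :: "'v set set \<Rightarrow> real^'n^'v \<Rightarrow> real^('v set) \<Rightarrow> real^'n^'v" where
  "rigidity_transpose E q z = (\<Sum>e\<in>E. (z $ e) *\<^sub>R edge_adj e (edge_vec e q))"

lemma linear_rigidity_transpose: "linear (rigidity_transpose E q)"
  by (rule linearI) (simp_all add: rigidity_transpose_def scaleR_add_left sum.distrib scaleR_sum_right)

lemma inner_rigidity_transpose:
  "rigidity_transpose E q z \<bullet> v = (\<Sum>e\<in>E. z $ e * edge_form e q v)"
  unfolding rigidity_transpose_def edge_form_def by (simp add: inner_sum_left inner_edge_adj)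

lemma tendsto_rigidity_transpose [tendsto_intros]:
  "(f \<longlongrightarrow> q) F \<Longrightarrow> (g \<longlongrightarrow> z) F \<Longrightarrow>
    ((\<lambda>x. rigidity_transpose E (f x) (g x)) \<longlongrightarrow> rigidity_transpose E q z) F"
  unfolding rigidity_transpose_def by (intro tendsto_intros)

lemma rigidity_transpose_axis:
  fixes E :: "'v::finite set set"
  assumes "e \<in> E"
  shows "rigidity_transpose E q (axis e 1) = edge_adj e (edge_vec e q)"
proof -
  have "rigidity_transpose E q (axis e 1) = (\<Sum>e'\<in>E. if e' = e then edge_adj e' (edge_vec e' q) else 0)"
    unfolding rigidity_transpose_def axis_def by (intro sum.cong) auto
  then show ?thesis using assms by (simp add: sum.delta')
qed

lemma norm_rigidity_transpose_eq_if_congruent: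
  assumes "q' \<in> congruent_configs q"
  shows "norm (rigidity_transpose E q' z) = norm (rigidity_transpose E q z)"
proof -
  have "rigidity_transpose E q' z \<bullet> rigidity_transpose E q' z
      = rigidity_transpose E q z \<bullet> rigidity_transpose E q z"
    unfolding rigidity_transpose_def inner_sum_left inner_sum_right
    by (simp add: inner_edge_adj_edge_adj inner_edge_vec_eq_if_congruent[OF assms])
  then show ?thesis by (simp add: norm_eq_sqrt_inner)
qed

lemma ker_Df_eq: "ker_Df E q = {v. \<forall>e\<in>E. edge_form e q v = 0}"
proof -
  have "((\<lambda>q. edge_sqlen q e) has_derivative (\<lambda>v. 2 * edge_form e q v)) (at q)" for e
    unfolding edge_sqlen_eq_edge_form edge_form_def
    by (auto intro!: derivative_eq_intros simp: inner_commute)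
  then have "frechet_derivative (\<lambda>q. edge_sqlen q e) (at q) = (\<lambda>v. 2 * edge_form e q v)" for e
    by (rule frechet_derivative_at[symmetric])
  then show ?thesis unfolding ker_Df_def by auto
qed

lemma ker_Df_eq_orthogonal_comp:
  fixes E :: "'v::finite set set"
  shows "ker_Df E q = (range (rigidity_transpose E q))\<^sup>\<bottom>"
proof -
  have "(\<forall>z. rigidity_transpose E q z \<bullet> v = 0) \<longleftrightarrow> (\<forall>e\<in>E. edge_form e q v = 0)" for v
  proof
    assume "\<forall>z. rigidity_transpose E q z \<bullet> v = 0"
    then show "\<forall>e\<in>E. edge_form e q v = 0"
      by (metis rigidity_transpose_axis inner_edge_adj edge_form_def)
  qed (simp add: inner_rigidity_transpose)
  then show ?thesis unfolding ker_Df_eq orthogonal_comp_def orthogonal_def by auto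
qed

lemma orthogonal_comp_ker_Df:
  fixes E :: "'v::finite set set"
  shows "(ker_Df E q)\<^sup>\<bottom> = range (rigidity_transpose E q)"
  unfolding ker_Df_eq_orthogonal_comp
  by (intro orthogonal_comp_self linear_subspace_image linear_rigidity_transpose subspace_UNIV)

lemma rigidity_transpose_preimage_bound:
  fixes E :: "'v::finite set set" and qs :: "real^'n^'v"
  obtains K where "K > 0"
    and "\<And>q z. q \<in> congruent_configs qs \<Longrightarrow>
           \<exists>z'. rigidity_transpose E q z' = rigidity_transpose E q z
                \<and> norm z' \<le> K * norm (rigidity_transpose E q z)"
proof -
  \<comment> \<open>Norms agree for congruent q, so each R(q)^T has kernel Z and is bounded below off Z.\<close>
  let ?L = "rigidity_transpose E qs"
  define Z where "Z = {z. ?L z = 0}"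
  have subZ: "subspace Z"
    unfolding Z_def by (rule linear_subspace_kernel[OF linear_rigidity_transpose])
  have "\<forall>z\<in>Z\<^sup>\<bottom>. ?L z = 0 \<longrightarrow> z = 0"
    unfolding Z_def orthogonal_comp_def orthogonal_def by auto
  then obtain c where "c > 0" and c: "\<forall>z\<in>Z\<^sup>\<bottom>. c * norm z \<le> norm (?L z)"
    using injective_imp_isometric[OF closed_subspace[OF subspace_orthogonal_comp]
        subspace_orthogonal_comp linear_conv_bounded_linear[THEN iffD1, OF linear_rigidity_transpose]]
    by blast
  show ?thesis
  proof (rule that[of "1 / c"])
    show "1 / c > 0" using \<open>c > 0\<close> by simp
    fix q z assume q: "q \<in> congruent_configs qs"
    obtain y z' where "y \<in> Z" and z': "z' \<in> Z\<^sup>\<bottom>" and "z = y + z'"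
      using subspace_sum_orthogonal_comp[OF subZ] by (metis UNIV_I set_plus_elim)
    have "rigidity_transpose E q y = 0"
      using norm_rigidity_transpose_eq_if_congruent[OF q, of E y] \<open>y \<in> Z\<close> unfolding Z_def by simp
    then have eq: "rigidity_transpose E q z' = rigidity_transpose E q z"
      unfolding \<open>z = y + z'\<close> linear_add[OF linear_rigidity_transpose] by simp
    have "c * norm z' \<le> norm (rigidity_transpose E q z')"
      using c z' norm_rigidity_transpose_eq_if_congruent[OF q, of E z'] by simp
    then have "norm z' \<le> 1 / c * norm (rigidity_transpose E q z)"
      using \<open>c > 0\<close> eq by (simp add: field_simps)
    with eq show "\<exists>z'. rigidity_transpose E q z' = rigidity_transpose E q z
        \<and> norm z' \<le> 1 / c * norm (rigidity_transpose E q z)" by blast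
  qed
qed

lemma norm_diff_le_if_relpow:
  assumes "\<And>a b. (a, b) \<in> R \<Longrightarrow> norm (p $ b - p $ a) \<le> L"
    and "(a, b) \<in> R ^^ n"
  shows "norm (p $ b - p $ a) \<le> n * L"
  using assms(2)
proof (induction n arbitrary: b)
  case (Suc n)
  then obtain c where ac: "(a, c) \<in> R ^^ n" and cb: "(c, b) \<in> R" by auto
  have "norm (p $ b - p $ a) \<le> norm (p $ b - p $ c) + norm (p $ c - p $ a)"
    using norm_triangle_ineq[of "p $ b - p $ c" "p $ c - p $ a"] by simp
  with Suc.IH[OF ac] assms(1)[OF cb] show ?case by (simp add: algebra_simps)
qed simp

lemma bounded_representatives:
  fixes E :: "'v::finite set set"
  obtains B where "\<And>p::real^'n^'v. psi E dl p \<le> 1 \<Longrightarrow>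
    \<exists>p'. psi E dl p' = psi E dl p \<and> psi_grad E dl p' = psi_grad E dl p \<and> norm p' \<le> B"
proof -
  define R where
    "R = {(a, b). \<exists>e\<in>E. (a, b) = (edge_src e, edge_tgt e) \<or> (a, b) = (edge_tgt e, edge_src e)}"
  define rep where "rep i = (SOME j. (i, j) \<in> R\<^sup>*)" for i
  have rep_edge: "rep (edge_src e) = rep (edge_tgt e)" if "e \<in> E" for e
  proof -
    have "(edge_src e, edge_tgt e) \<in> R" "(edge_tgt e, edge_src e) \<in> R"
      unfolding R_def using that by auto
    then have "(edge_src e, j) \<in> R\<^sup>* \<longleftrightarrow> (edge_tgt e, j) \<in> R\<^sup>*" for j
      by (meson converse_rtrancl_into_rtrancl)
    then show ?thesis unfolding rep_def by simp
  qed
  have "\<exists>n. (i, rep i) \<in> R ^^ n" for i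
    unfolding rep_def rtrancl_power[symmetric] by (rule someI[of _ i]) simp
  then obtain len where len: "\<And>i. (i, rep i) \<in> R ^^ len i" by metis
  let ?L = "edge_length_bound E dl 1"
  show ?thesis
  proof (rule that)
    fix p :: "real^'n^'v" assume p: "psi E dl p \<le> 1"
    \<comment> \<open>Since rep is constant along edges, this translates each connected component rigidly.\<close>
    define p' where "p' = (\<chi> i. p $ i - p $ rep i)"
    have edges: "\<forall>e\<in>E. edge_vec e p' = edge_vec e p"
      unfolding edge_vec_def p'_def using rep_edge by simp
    have step: "norm (p $ b - p $ a) \<le> ?L" if "(a, b) \<in> R" for a b
      using that norm_edge_vec_le_edge_length_bound[OF _ p] unfolding R_def edge_vec_def
      by (auto simp: norm_minus_commute)
    have "norm (p' $ i) \<le> len i * ?L" for i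
      using norm_diff_le_if_relpow[OF step len, of i] unfolding p'_def
      by (simp add: norm_minus_commute)
    moreover have "norm p' \<le> (\<Sum>i\<in>UNIV. norm (p' $ i))"
      unfolding norm_vec_def by (rule L2_set_le_sum) simp
    ultimately have "norm p' \<le> (\<Sum>i\<in>UNIV. len i * ?L)"
      by (meson order_trans sum_mono)
    then show "\<exists>p'. psi E dl p' = psi E dl p \<and> psi_grad E dl p' = psi_grad E dl p
        \<and> norm p' \<le> (\<Sum>i\<in>UNIV. len i * ?L)"
      using psi_psi_grad_cong[OF edges] by blast
  qed
qed

lemma residual_add_scaleR:
  assumes "residual dl q e = 0"
  shows "residual dl (q + t *\<^sub>R u) e = t * (2 * edge_form e q u + t * edge_form e u u)"
  using assms unfolding residual_def edge_form_def edge_vec_add edge_vec_scaleR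
  by (simp add: inner_add_left inner_add_right inner_commute algebra_simps)

lemma scaled_gradient_limits:
  fixes E :: "'v::finite set set"
  assumes q: "q \<longlonglongrightarrow> qs" and u: "u \<longlonglongrightarrow> us" and t: "t \<longlonglongrightarrow> 0" and "\<And>k. t k \<noteq> 0"
    and "\<And>k. q k \<in> realizations E dl"
  defines "p \<equiv> \<lambda>k. q k + t k *\<^sub>R u k"
  shows "(\<lambda>k. (1 / t k) *\<^sub>R psi_grad E dl (p k))
           \<longlonglongrightarrow> (\<Sum>e\<in>E. (2 * edge_form e qs us) *\<^sub>R edge_adj e (edge_vec e qs))"
    and "(\<lambda>k. psi E dl (p k) / (t k)\<^sup>2) \<longlonglongrightarrow> (\<Sum>e\<in>E. (edge_form e qs us)\<^sup>2)"
proof -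
  define h where "h k e = 2 * edge_form e (q k) (u k) + t k * edge_form e (u k) (u k)" for k e
  have res: "residual dl (p k) e = t k * h k e" if "e \<in> E" for k e
    using assms(5)[of k] that unfolding p_def h_def realizations_iff_residual
    by (simp add: residual_add_scaleR)
  have "(\<lambda>k. h k e) \<longlonglongrightarrow> 2 * edge_form e qs us + 0 * edge_form e us us" for e
    unfolding h_def by (intro tendsto_intros q u t)
  then have h: "(\<lambda>k. h k e) \<longlonglongrightarrow> 2 * edge_form e qs us" for e by simp
  have "p \<longlonglongrightarrow> qs + 0 *\<^sub>R us" unfolding p_def by (intro tendsto_intros q u t)
  then have p: "p \<longlonglongrightarrow> qs" by simp
  have "(1 / t k) *\<^sub>R psi_grad E dl (p k) = (\<Sum>e\<in>E. h k e *\<^sub>R edge_adj e (edge_vec e (p k)))" for k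
    unfolding psi_grad_def scaleR_sum_right using assms(4)[of k] by (intro sum.cong) (auto simp: res)
  moreover have "(\<lambda>k. \<Sum>e\<in>E. h k e *\<^sub>R edge_adj e (edge_vec e (p k)))
      \<longlonglongrightarrow> (\<Sum>e\<in>E. (2 * edge_form e qs us) *\<^sub>R edge_adj e (edge_vec e qs))"
    by (intro tendsto_intros h p)
  ultimately show "(\<lambda>k. (1 / t k) *\<^sub>R psi_grad E dl (p k))
      \<longlonglongrightarrow> (\<Sum>e\<in>E. (2 * edge_form e qs us) *\<^sub>R edge_adj e (edge_vec e qs))" by simp
  have "psi E dl (p k) / (t k)\<^sup>2 = (1/4) * (\<Sum>e\<in>E. (h k e)\<^sup>2)" for k
    unfolding psi_eq_residuals using assms(4)[of k]
    by (simp add: res power_mult_distrib sum_distrib_left[symmetric])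
  moreover have "(\<lambda>k. (1/4) * (\<Sum>e\<in>E. (h k e)\<^sup>2)) \<longlonglongrightarrow> (1/4) * (\<Sum>e\<in>E. (2 * edge_form e qs us)\<^sup>2)"
    by (intro tendsto_intros h)
  ultimately show "(\<lambda>k. psi E dl (p k) / (t k)\<^sup>2) \<longlonglongrightarrow> (\<Sum>e\<in>E. (edge_form e qs us)\<^sup>2)"
    by (simp add: power_mult_distrib sum_distrib_left)
qed

lemma blowup_contradiction:
  fixes E :: "'v::finite set set"
  assumes q: "q \<longlonglongrightarrow> qs" and y: "y \<longlonglongrightarrow> ys" and t: "t \<longlonglongrightarrow> 0" and "\<And>k. t k > 0"
    and "\<And>k. q k \<in> realizations E dl"
    and unit: "\<And>k. norm (rigidity_transpose E (q k) (y k)) = 1"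
    and eps: "eps \<longlonglongrightarrow> 0"
    and small_grad: "\<And>k. (norm (psi_grad E dl (q k + t k *\<^sub>R rigidity_transpose E (q k) (y k))))\<^sup>2
                       \<le> eps k * psi E dl (q k + t k *\<^sub>R rigidity_transpose E (q k) (y k))"
  shows False
proof -
  define u where "u k = rigidity_transpose E (q k) (y k)" for k
  define us where "us = rigidity_transpose E qs ys"
  define p where "p k = q k + t k *\<^sub>R u k" for k
  define G where "G = (\<Sum>e\<in>E. (2 * edge_form e qs us) *\<^sub>R edge_adj e (edge_vec e qs))"
  have u: "u \<longlonglongrightarrow> us" unfolding u_def us_def by (intro tendsto_intros q y)
  then have "norm us = 1"
    using tendsto_norm[OF u] unit unfolding u_def by (simp add: LIMSEQ_const_iff)
  have t0: "t k \<noteq> 0" for k using assms(4)[of k] by simp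
  note limits = scaled_gradient_limits[OF q u t t0 assms(5), folded p_def G_def]
  have le: "(norm ((1 / t k) *\<^sub>R psi_grad E dl (p k)))\<^sup>2 \<le> eps k * (psi E dl (p k) / (t k)\<^sup>2)" for k
    using divide_right_mono[OF small_grad[of k, folded u_def, folded p_def], of "(t k)\<^sup>2"]
    by (simp add: power_divide)
  have "(\<lambda>k. eps k * (psi E dl (p k) / (t k)\<^sup>2)) \<longlonglongrightarrow> 0 * (\<Sum>e\<in>E. (edge_form e qs us)\<^sup>2)"
    by (intro tendsto_intros eps limits(2))
  then have "(norm G)\<^sup>2 \<le> 0 * (\<Sum>e\<in>E. (edge_form e qs us)\<^sup>2)"
    by (rule tendsto_le[OF trivial_limit_sequentially _ tendsto_power[OF tendsto_norm[OF limits(1)]]])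
      (intro always_eventually allI le)
  then have "G \<bullet> us = 0" by simp
  then have "(\<Sum>e\<in>E. (edge_form e qs us)\<^sup>2) = 0"
    unfolding G_def inner_sum_left
    by (simp add: inner_edge_adj edge_form_def power2_eq_square sum_distrib_left[symmetric] mult.assoc)
  then have "\<forall>e\<in>E. edge_form e qs us = 0" by (simp add: sum_nonneg_eq_0_iff)
  then have "us \<bullet> us = 0" unfolding us_def by (simp add: inner_rigidity_transpose[of E qs ys])
  with \<open>norm us = 1\<close> show False by simp
qed

lemma closest_congruent_normal:
  fixes E :: "'v::finite set set" and qs :: "real^'n^'v"
  assumes rigid: "\<forall>p::real^'n^'v. p \<in> realizations E dl \<longrightarrow> inf_rigid E p"
    and "qs \<in> realizations E dl"
  defines "Q \<equiv> closest_point (congruent_configs qs)"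
  obtains K where "\<And>p. \<exists>y. sgn (p - Q p) = rigidity_transpose E (Q p) y \<and> norm y \<le> K"
proof -
  obtain K where "K > 0" and K: "\<And>q z. q \<in> congruent_configs qs \<Longrightarrow>
      \<exists>z'. rigidity_transpose E q z' = rigidity_transpose E q z
           \<and> norm z' \<le> K * norm (rigidity_transpose E q z)"
    by (rule rigidity_transpose_preimage_bound) blast
  show ?thesis
  proof (rule that)
    fix p
    have "Q p \<in> congruent_configs qs" and closest: "\<forall>y\<in>congruent_configs qs. dist p (Q p) \<le> dist p y"
      unfolding Q_def using closest_point_exists[OF closed_congruent_configs] congruent_configs_self
      by blast+
    have orbit: "congruent_configs (Q p) = congruent_configs qs"
      by (rule congruent_configs_eq) fact
    have "inf_rigid E (Q p)" using rigid realizations_congruent[OF assms(2) \<open>Q p \<in> _\<close>] by blast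
    then have "tangent_space (congruent_configs qs) (Q p) = ker_Df E (Q p)"
      unfolding inf_rigid_def orbit .
    then have "p - Q p \<in> (ker_Df E (Q p))\<^sup>\<bottom>"
      using inner_tangent_space_eq_0_if_closest[OF \<open>Q p \<in> _\<close> closest]
      unfolding orthogonal_comp_def orthogonal_def by (auto simp: inner_commute)
    then obtain w where "p - Q p = rigidity_transpose E (Q p) w"
      unfolding orthogonal_comp_ker_Df by blast
    then have "sgn (p - Q p) = rigidity_transpose E (Q p) (inverse (norm (p - Q p)) *\<^sub>R w)"
      by (simp add: sgn_div_norm linear_cmul[OF linear_rigidity_transpose])
    then obtain y where y: "sgn (p - Q p) = rigidity_transpose E (Q p) y"
      and "norm y \<le> K * norm (sgn (p - Q p))"
      using K[OF \<open>Q p \<in> _\<close>] by metis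
    moreover have "K * norm (sgn (p - Q p)) \<le> K"
      using \<open>K > 0\<close> by (simp add: norm_sgn)
    ultimately show "\<exists>y. sgn (p - Q p) = rigidity_transpose E (Q p) y \<and> norm y \<le> K"
      by auto
  qed
qed

lemma degenerate_sequence:
  fixes E :: "'v::finite set set"
  assumes "\<not> (\<exists>r>0. \<exists>c3>0. \<forall>p::real^'n^'v. psi E dl p \<le> r \<longrightarrow>
                 (norm (grad (psi E dl) p))\<^sup>2 \<ge> c3 * psi E dl p)"
  obtains p :: "nat \<Rightarrow> real^'n^'v" and qs eps
  where "p \<longlonglongrightarrow> qs" and "eps \<longlonglongrightarrow> 0" and "\<And>k. psi E dl (p k) \<le> eps k"
    and "\<And>k. (norm (psi_grad E dl (p k)))\<^sup>2 < eps k * psi E dl (p k)"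
proof -
  obtain B where B: "\<And>p::real^'n^'v. psi E dl p \<le> 1 \<Longrightarrow>
      \<exists>p'. psi E dl p' = psi E dl p \<and> psi_grad E dl p' = psi_grad E dl p \<and> norm p' \<le> B"
    by (rule bounded_representatives) blast
  have "\<exists>p::real^'n^'v. psi E dl p \<le> inverse (Suc k) \<and>
      (norm (psi_grad E dl p))\<^sup>2 < inverse (Suc k) * psi E dl p \<and> norm p \<le> B" for k
  proof -
    let ?e = "inverse (real (Suc k))"
    have "\<not> (\<forall>p::real^'n^'v. psi E dl p \<le> ?e \<longrightarrow> (norm (grad (psi E dl) p))\<^sup>2 \<ge> ?e * psi E dl p)"
      using assms by (metis inverse_positive_iff_positive of_nat_0_less_iff zero_less_Suc)
    then obtain p0 :: "real^'n^'v" where p0: "psi E dl p0 \<le> ?e"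
      and grad: "(norm (psi_grad E dl p0))\<^sup>2 < ?e * psi E dl p0"
      by (auto simp: grad_psi not_le)
    have "?e \<le> 1" by (simp add: inverse_le_1_iff)
    then obtain p' where "psi E dl p' = psi E dl p0" "psi_grad E dl p' = psi_grad E dl p0" "norm p' \<le> B"
      using B[of p0] p0 by auto
    then show ?thesis using p0 grad by (intro exI[of _ p']) simp
  qed
  then obtain P :: "nat \<Rightarrow> real^'n^'v" where P: "\<And>k. psi E dl (P k) \<le> inverse (Suc k)"
    "\<And>k. (norm (psi_grad E dl (P k)))\<^sup>2 < inverse (Suc k) * psi E dl (P k)" "\<And>k. norm (P k) \<le> B"
    by metis
  have "bounded (range P)" using P(3) by (auto simp: bounded_iff)
  then obtain qs \<sigma> where "strict_mono \<sigma>" and "(P \<circ> \<sigma>) \<longlonglongrightarrow> qs"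
    using bounded_imp_convergent_subsequence by blast
  moreover have "((\<lambda>k. inverse (real (Suc k))) \<circ> \<sigma>) \<longlonglongrightarrow> 0"
    using LIMSEQ_subseq_LIMSEQ[OF LIMSEQ_inverse_real_of_nat \<open>strict_mono \<sigma>\<close>] .
  ultimately show ?thesis using P by (intro that) auto
qed

lemma closest_congruent_blowup_sequence:
  fixes E :: "'v::finite set set" and p :: "nat \<Rightarrow> real^'n^'v"
  assumes rigid: "\<forall>p::real^'n^'v. p \<in> realizations E dl \<longrightarrow> inf_rigid E p"
    and qs: "qs \<in> realizations E dl" and p: "p \<longlonglongrightarrow> qs"
    and not_realization: "\<And>k. p k \<notin> realizations E dl"
  obtains \<sigma> q y ys t
  where "strict_mono \<sigma>" and "q \<longlonglongrightarrow> qs" and "y \<longlonglongrightarrow> ys" and "t \<longlonglongrightarrow> 0" and "\<And>k. t k > 0"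
    and "\<And>k. q k \<in> realizations E dl" and "\<And>k. norm (rigidity_transpose E (q k) (y k)) = 1"
    and "\<And>k. p (\<sigma> k) = q k + t k *\<^sub>R rigidity_transpose E (q k) (y k)"
proof -
  define Q where "Q = closest_point (congruent_configs qs)"
  have Q: "Q x \<in> realizations E dl" for x
    unfolding Q_def
    by (rule realizations_congruent[OF qs closest_point_in_set[OF closed_congruent_configs]])
      (use congruent_configs_self in blast)
  obtain K where "\<And>x. \<exists>y. sgn (x - Q x) = rigidity_transpose E (Q x) y \<and> norm y \<le> K"
    using closest_congruent_normal[OF rigid qs] unfolding Q_def by blast
  then have "\<exists>Y. \<forall>k. sgn (p k - Q (p k)) = rigidity_transpose E (Q (p k)) (Y k) \<and> norm (Y k) \<le> K"
    by (intro choice) blast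
  then obtain Y where Y: "\<And>k. sgn (p k - Q (p k)) = rigidity_transpose E (Q (p k)) (Y k)"
    and "\<And>k. norm (Y k) \<le> K" by blast
  then have "bounded (range Y)" by (auto simp: bounded_iff)
  then obtain ys \<sigma> where \<sigma>: "strict_mono \<sigma>" and "(Y \<circ> \<sigma>) \<longlonglongrightarrow> ys"
    using bounded_imp_convergent_subsequence by blast
  have Q_lim: "(\<lambda>k. Q (p k)) \<longlonglongrightarrow> qs"
    unfolding Q_def by (rule tendsto_closest_point[OF closed_congruent_configs congruent_configs_self p])
  have "p k \<noteq> Q (p k)" for k using not_realization Q by metis
  then have "norm (p k - Q (p k)) > 0" for k by simp
  moreover have "norm (rigidity_transpose E (Q (p k)) (Y k)) = 1" for k
    using \<open>p k \<noteq> Q (p k)\<close> unfolding Y[symmetric] by (simp add: norm_sgn)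
  moreover have "p k = Q (p k) + norm (p k - Q (p k)) *\<^sub>R rigidity_transpose E (Q (p k)) (Y k)" for k
    using \<open>p k \<noteq> Q (p k)\<close> unfolding Y[symmetric] by (simp add: sgn_div_norm)
  moreover have "(\<lambda>k. norm (p k - Q (p k))) \<longlonglongrightarrow> norm (qs - qs)"
    by (intro tendsto_intros p Q_lim)
  ultimately show ?thesis
    using Q \<sigma> \<open>(Y \<circ> \<sigma>) \<longlonglongrightarrow> ys\<close> LIMSEQ_subseq_LIMSEQ[OF Q_lim \<sigma>]
      LIMSEQ_subseq_LIMSEQ[of "\<lambda>k. norm (p k - Q (p k))" 0, OF _ \<sigma>]
    by (intro that[of \<sigma> "\<lambda>k. Q (p (\<sigma> k))" "Y \<circ> \<sigma>" ys "\<lambda>k. norm (p (\<sigma> k) - Q (p (\<sigma> k)))"])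
      (auto simp: o_def)
qed

lemma gradient_lower_bound:
  fixes E :: "'v::finite set set"
  assumes rigid: "\<forall>p::real^'n^'v. p \<in> realizations E dl \<longrightarrow> inf_rigid E p"
  shows "\<exists>r>0. \<exists>c3>0. \<forall>p::real^'n^'v. psi E dl p \<le> r \<longrightarrow>
           (norm (grad (psi E dl) p))\<^sup>2 \<ge> c3 * psi E dl p"
proof (rule ccontr)
  assume "\<not> ?thesis"
  then obtain p :: "nat \<Rightarrow> real^'n^'v" and qs eps where p: "p \<longlonglongrightarrow> qs" and eps: "eps \<longlonglongrightarrow> 0"
    and psi_le: "\<And>k. psi E dl (p k) \<le> eps k"
    and small_grad: "\<And>k. (norm (psi_grad E dl (p k)))\<^sup>2 < eps k * psi E dl (p k)"
    by (rule degenerate_sequence) blast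
  have "(\<lambda>k. psi E dl (p k)) \<longlonglongrightarrow> psi E dl qs"
    unfolding psi_eq_residuals residual_def edge_form_def by (intro tendsto_intros p)
  then have "psi E dl qs \<le> 0"
    by (rule tendsto_le[OF trivial_limit_sequentially eps]) (simp add: psi_le)
  then have qs: "qs \<in> realizations E dl"
    using psi_nonneg[of E dl qs] psi_eq_0_iff by fastforce
  have "p k \<notin> realizations E dl" for k
    using small_grad[of k] psi_eq_0_iff[of E dl "p k"] by auto
  then obtain \<sigma> q y ys t where \<sigma>: "strict_mono \<sigma>" and "q \<longlonglongrightarrow> qs" "y \<longlonglongrightarrow> ys" "t \<longlonglongrightarrow> 0"
    "\<And>k. t k > 0" "\<And>k. q k \<in> realizations E dl" "\<And>k. norm (rigidity_transpose E (q k) (y k)) = 1"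
    and p_eq: "\<And>k. p (\<sigma> k) = q k + t k *\<^sub>R rigidity_transpose E (q k) (y k)"
    by (rule closest_congruent_blowup_sequence[OF rigid qs p]) blast
  then show False
    using LIMSEQ_subseq_LIMSEQ[OF eps \<sigma>] small_grad[of "\<sigma> _", unfolded p_eq]
    by (intro blowup_contradiction[where eps = "eps \<circ> \<sigma>"]) (auto intro: less_imp_le)
qed

theorem proposition3p7:
  fixes E :: "'v::finite set set" and dl :: "'v set \<Rightarrow> real"
  assumes "is_graph E"
    and "\<forall>e\<in>E. dl e \<ge> 0"
  shows "(\<forall>r>0. \<exists>c1>0. \<forall>p::real^'n^'v. psi E dl p \<le> r \<longrightarrow>
            (norm (grad (psi E dl) p))\<^sup>2 \<le> c1 * psi E dl p)
       \<and> (\<forall>r>0. \<forall>l::nat. l \<ge> 2 \<longrightarrow> (\<exists>c2>0. \<forall>p::real^'n^'v. psi E dl p \<le> r \<longrightarrow>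
            (\<forall>vs. length vs = l \<longrightarrow>
               \<bar>higher_deriv (psi E dl) vs p\<bar> \<le> c2 * prod_list (map norm vs))))
       \<and> ((\<forall>p::real^'n^'v. p \<in> realizations E dl \<longrightarrow> inf_rigid E p) \<longrightarrow>
            (\<exists>r>0. \<exists>c3>0. \<forall>p::real^'n^'v. psi E dl p \<le> r \<longrightarrow>
               (norm (grad (psi E dl) p))\<^sup>2 \<ge> c3 * psi E dl p))"
  by (simp add: gradient_upper_bound higher_deriv_upper_bound gradient_lower_bound)

end
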